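(* For every $n\ge 2$, let $\mathsf D_n=\{x\in\mathbb Z^n:\sum_i x_i\equiv 0\bmod 2\}$ and $t=\lfloor (n-2)/2\rfloor$. Then the set of isomorphism types of the groups $\mathsf D_n/\Lambda'$, where $\Lambda'$ runs through the sublattices of $\mathsf D_n$ generated by $n$ linearly independent minimal vectors of $\mathsf D_n$, is exactly $\{(\mathbb Z/2\mathbb Z)^k: 0\le k\le t\}$.
   Context: Minimal vectors of a lattice are its nonzero vectors of smallest norm $x\cdot x$ (for $\mathsf D_n$ these are the vectors $\pm\varepsilon_i\pm\varepsilon_j$, $i\ne j$). In the paper this set is written $\{1,2,\dots,2^t\}$, where $2^k$ denotes $(\mathbb Z/2\mathbb Z)^k$. *)

theory Defs
  imports "HOL-Algebra.Algebra"
begin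

text \<open>Vectors of Z^n are represented as functions nat => int vanishing outside {0..<n}.\<close>

definition zvec :: "nat \<Rightarrow> (nat \<Rightarrow> int) set" where
  "zvec n = {x. \<forall>i\<ge>n. x i = 0}"

definition Dlat :: "nat \<Rightarrow> (nat \<Rightarrow> int) set" where
  "Dlat n = {x \<in> zvec n. even (\<Sum>i<n. x i)}"

definition znorm :: "nat \<Rightarrow> (nat \<Rightarrow> int) \<Rightarrow> int" where
  "znorm n x = (\<Sum>i<n. x i * x i)"

definition min_vectors :: "nat \<Rightarrow> (nat \<Rightarrow> int) set \<Rightarrow> (nat \<Rightarrow> int) set" where
  "min_vectors n L = {v \<in> L. v \<noteq> (\<lambda>_. 0) \<and> (\<forall>w\<in>L. w \<noteq> (\<lambda>_. 0) \<longrightarrow> znorm n v \<le> znorm n w)}"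

definition lin_indep :: "nat \<Rightarrow> nat \<Rightarrow> (nat \<Rightarrow> nat \<Rightarrow> int) \<Rightarrow> bool" where
  "lin_indep n m v \<longleftrightarrow>
     (\<forall>c :: nat \<Rightarrow> real. (\<forall>i<n. (\<Sum>j<m. c j * real_of_int (v j i)) = 0) \<longrightarrow> (\<forall>j<m. c j = 0))"

definition int_span :: "nat \<Rightarrow> (nat \<Rightarrow> nat \<Rightarrow> int) \<Rightarrow> (nat \<Rightarrow> int) set" where
  "int_span m v = {x. \<exists>c :: nat \<Rightarrow> int. x = (\<lambda>i. \<Sum>j<m. c j * v j i)}"

definition Dgroup :: "nat \<Rightarrow> (nat \<Rightarrow> int) monoid" where
  "Dgroup n = \<lparr>carrier = Dlat n, monoid.mult = (\<lambda>x y i. x i + y i), one = (\<lambda>_. 0)\<rparr>"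

text \<open>The elementary abelian group (Z/2Z)^k, as 0/1-vectors of length k with addition mod 2.\<close>
definition elem2 :: "nat \<Rightarrow> (nat \<Rightarrow> int) monoid" where
  "elem2 k = \<lparr>carrier = {f. (\<forall>i. f i \<in> {0, 1}) \<and> (\<forall>i\<ge>k. f i = 0)},
              monoid.mult = (\<lambda>f g i. (f i + g i) mod 2), one = (\<lambda>_. 0)\<rparr>"

end

theory Submission
  imports Defs "Jordan_Normal_Form.Determinant"
begin

text \<open>
  The minimal vectors of \<open>D\<^sub>n\<close> are the roots \<open>\<plusminus>e\<^sub>a \<plusminus> e\<^sub>b\<close>. Let \<open>L\<close> be spanned by \<open>n\<close>
  linearly independent roots. If \<open>2e\<^sub>i \<notin> L\<close>, the vector \<open>s\<close> with \<open>s\<^sub>a = 1\<close> if \<open>e\<^sub>i - e\<^sub>a \<in> L\<close>,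
  \<open>s\<^sub>a = -1\<close> if \<open>e\<^sub>i + e\<^sub>a \<in> L\<close> and \<open>s\<^sub>a = 0\<close> otherwise is nonzero and orthogonal to every
  generator, contradicting independence; so \<open>2\<int>\<^sup>n \<subseteq> L\<close>. Then \<open>L\<close> is determined by the classes
  of the equivalence \<open>a \<sim> b \<longleftrightarrow> e\<^sub>a - e\<^sub>b \<in> L\<close>: it consists of the vectors whose coordinate sum
  over every class is even. With \<open>c\<close> classes this gives \<open>D\<^sub>n/L \<cong> (\<int>/2\<int>)\<^sup>c\<^sup>-\<^sup>1\<close>, and independence
  forces every class to have at least two elements, so \<open>2c \<le> n\<close>. Conversely, pairing off
  coordinates realises every \<open>c\<close> with \<open>2c \<le> n\<close>.
\<close>

lemma left_null_vector_if_right_null_vector: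
  fixes A :: "nat \<Rightarrow> nat \<Rightarrow> real"
  assumes "i0 < n" "u i0 \<noteq> 0" "\<forall>j<n. (\<Sum>i<n. A j i * u i) = 0"
  shows "\<exists>c. (\<exists>j<n. c j \<noteq> 0) \<and> (\<forall>i<n. (\<Sum>j<n. c j * A j i) = 0)"
proof -
  define M where "M = mat n n (\<lambda>(j, i). A j i)"
  have M: "M \<in> carrier_mat n n" unfolding M_def by simp
  have "M *\<^sub>v vec n u = 0\<^sub>v n"
    using assms(3) by (auto simp: M_def mult_mat_vec_def scalar_prod_def atLeast0LessThan)
  moreover have "vec n u \<noteq> 0\<^sub>v n"
  proof
    assume "vec n u = 0\<^sub>v n"
    hence "vec n u $ i0 = 0\<^sub>v n $ i0" by simp
    with assms(1,2) show False by simp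
  qed
  ultimately have "det M = 0" using det_0_iff_vec_prod_zero[OF M] vec_carrier[of n u] by blast
  hence "det (transpose_mat M) = 0" using det_transpose[OF M] by simp
  then obtain w where w: "w \<in> carrier_vec n" "w \<noteq> 0\<^sub>v n" "transpose_mat M *\<^sub>v w = 0\<^sub>v n"
    using det_0_iff_vec_prod_zero[of "transpose_mat M" n] M by auto
  from w(1,2) obtain j where j: "j < n" "w $ j \<noteq> 0"
    by (metis carrier_vecD eq_vecI index_zero_vec(1) index_zero_vec(2))
  have "\<forall>i<n. (\<Sum>j<n. w $ j * A j i) = 0"
  proof (intro allI impI)
    fix i assume i: "i < n"
    have "(transpose_mat M *\<^sub>v w) $ i = 0" using w(3) i by simp
    thus "(\<Sum>j<n. w $ j * A j i) = 0"
      using i w(1) by (auto simp: M_def mult_mat_vec_def scalar_prod_def atLeast0LessThan mult.commute)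
  qed
  thus ?thesis using j by (intro exI[of _ "\<lambda>j. w $ j"]) auto
qed

lemma not_lin_indep_if_orthogonal:
  fixes u :: "nat \<Rightarrow> int"
  assumes "i < n" "u i \<noteq> 0" "\<forall>j<n. (\<Sum>k<n. u k * v j k) = 0"
  shows "\<not> lin_indep n n v"
proof -
  have "\<forall>j<n. (\<Sum>k<n. real_of_int (v j k) * real_of_int (u k)) = 0"
  proof (intro allI impI)
    fix j assume "j < n"
    hence "real_of_int (\<Sum>k<n. u k * v j k) = 0" using assms(3) by simp
    thus "(\<Sum>k<n. real_of_int (v j k) * real_of_int (u k)) = 0" by (simp add: mult.commute)
  qed
  then obtain c where "\<exists>j<n. c j \<noteq> 0" "\<forall>k<n. (\<Sum>j<n. c j * real_of_int (v j k)) = 0"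
    using left_null_vector_if_right_null_vector[of i n "\<lambda>k. real_of_int (u k)" "\<lambda>j k. real_of_int (v j k)"]
      assms(1,2) by auto
  thus ?thesis unfolding lin_indep_def by blast
qed

definition unit_vec :: "nat \<Rightarrow> nat \<Rightarrow> int" where
  "unit_vec a = (\<lambda>i. if i = a then 1 else 0)"

lemma unit_vec_commute: "unit_vec a i = unit_vec i a"
  by (simp add: unit_vec_def)

lemma sum_mult_unit_vec:
  assumes "finite A"
  shows "(\<Sum>i\<in>A. f i * unit_vec a i) = (if a \<in> A then f a else 0)"
proof -
  have "(\<Sum>i\<in>A. f i * unit_vec a i) = (\<Sum>i\<in>A. if i = a then f a else 0)"
    by (intro sum.cong) (auto simp: unit_vec_def)
  thus ?thesis using assms by simp
qed

lemma sum_sum_mult_unit_vec: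
  assumes "finite A"
  shows "(\<Sum>i\<in>A. \<Sum>k<c. z k * unit_vec (q k) i) = (\<Sum>k<c. if q k \<in> A then z k else 0)"
proof -
  have "(\<Sum>i\<in>A. \<Sum>k<c. z k * unit_vec (q k) i) = (\<Sum>k<c. \<Sum>i\<in>A. z k * unit_vec (q k) i)"
    by (rule sum.swap)
  also have "\<dots> = (\<Sum>k<c. if q k \<in> A then z k else 0)" using assms by (simp add: sum_mult_unit_vec)
  finally show ?thesis .
qed

lemma int_span_generator: "j < m \<Longrightarrow> v j \<in> int_span m v"
  unfolding int_span_def
proof (rule CollectI, rule exI[of _ "\<lambda>k. if k = j then 1 else 0"])
  assume j: "j < m"
  have "\<And>k i. (if k = j then 1 else 0) * v k i = (if k = j then v j i else 0)" by simp
  thus "v j = (\<lambda>i. \<Sum>k<m. (if k = j then 1 else 0) * v k i)" using j by (simp add: fun_eq_iff)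
qed

lemma int_span_zero: "(\<lambda>i. 0) \<in> int_span m v"
  unfolding int_span_def by (intro CollectI exI[of _ "\<lambda>j. 0"]) auto

lemma int_span_add:
  assumes "x \<in> int_span m v" "y \<in> int_span m v"
  shows "(\<lambda>i. x i + y i) \<in> int_span m v"
proof -
  obtain c d where "x = (\<lambda>i. \<Sum>j<m. c j * v j i)" "y = (\<lambda>i. \<Sum>j<m. d j * v j i)"
    using assms unfolding int_span_def by auto
  thus ?thesis unfolding int_span_def
    by (intro CollectI exI[of _ "\<lambda>j. c j + d j"]) (auto simp: sum.distrib algebra_simps)
qed

lemma int_span_smult:
  assumes "x \<in> int_span m v"
  shows "(\<lambda>i. k * x i) \<in> int_span m v"
proof -
  obtain c where "x = (\<lambda>i. \<Sum>j<m. c j * v j i)"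
    using assms unfolding int_span_def by auto
  thus ?thesis unfolding int_span_def
    by (intro CollectI exI[of _ "\<lambda>j. k * c j"]) (auto simp: sum_distrib_left algebra_simps)
qed

lemma int_span_diff:
  assumes "x \<in> int_span m v" "y \<in> int_span m v"
  shows "(\<lambda>i. x i - y i) \<in> int_span m v"
  using int_span_add[OF assms(1) int_span_smult[OF assms(2), of "-1"]] by simp

lemma int_span_sum:
  "finite A \<Longrightarrow> (\<forall>a\<in>A. x a \<in> int_span m v) \<Longrightarrow> (\<lambda>i. \<Sum>a\<in>A. x a i) \<in> int_span m v"
proof (induction A rule: finite_induct)
  case empty thus ?case using int_span_zero by simp
next
  case (insert a A)
  thus ?case using int_span_add[of "x a" m v "\<lambda>i. \<Sum>a\<in>A. x a i"] by simp
qed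

section \<open>The minimal vectors of \<open>D\<^sub>n\<close>\<close>

definition root_vec :: "nat \<Rightarrow> nat \<Rightarrow> int \<Rightarrow> int \<Rightarrow> nat \<Rightarrow> int" where
  "root_vec a b \<sigma> \<tau> = (\<lambda>i. \<sigma> * unit_vec a i + \<tau> * unit_vec b i)"

definition D_roots :: "nat \<Rightarrow> (nat \<Rightarrow> int) set" where
  "D_roots n = {root_vec a b \<sigma> \<tau> | a b \<sigma> \<tau>.
     a < n \<and> b < n \<and> a \<noteq> b \<and> \<sigma> \<in> {1, -1} \<and> \<tau> \<in> {1, -1}}"

lemma D_rootsE:
  assumes "w \<in> D_roots n"
  obtains a b \<sigma> \<tau> where "a < n" "b < n" "a \<noteq> b" "\<sigma> \<in> {1, -1}" "\<tau> \<in> {1, -1}"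
    "w = root_vec a b \<sigma> \<tau>"
  using assms unfolding D_roots_def by blast

lemma D_rootsI:
  "a < n \<Longrightarrow> b < n \<Longrightarrow> a \<noteq> b \<Longrightarrow> \<sigma> \<in> {1, -1} \<Longrightarrow> \<tau> \<in> {1, -1} \<Longrightarrow>
    root_vec a b \<sigma> \<tau> \<in> D_roots n"
  unfolding D_roots_def by blast

lemma root_vec_swap: "root_vec a b \<sigma> \<tau> = root_vec b a \<tau> \<sigma>"
  by (simp add: root_vec_def fun_eq_iff)

lemma sum_mult_root_vec:
  assumes "finite A"
  shows "(\<Sum>i\<in>A. s i * root_vec a b \<sigma> \<tau> i)
           = (if a \<in> A then \<sigma> * s a else 0) + (if b \<in> A then \<tau> * s b else 0)"
proof -
  have "(\<Sum>i\<in>A. s i * root_vec a b \<sigma> \<tau> i)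
          = (\<Sum>i\<in>A. (\<sigma> * s i) * unit_vec a i) + (\<Sum>i\<in>A. (\<tau> * s i) * unit_vec b i)"
    by (simp add: root_vec_def algebra_simps sum.distrib)
  thus ?thesis using assms by (simp add: sum_mult_unit_vec)
qed

lemma D_rootsD:
  assumes "w \<in> D_roots n"
  shows "w \<in> Dlat n" "w \<noteq> (\<lambda>_. 0)" "znorm n w = 2"
proof -
  obtain a b \<sigma> \<tau> where ab: "a < n" "b < n" "a \<noteq> b" "\<sigma> \<in> {1, -1}" "\<tau> \<in> {1, -1}"
    and w: "w = root_vec a b \<sigma> \<tau>"
    using assms by (rule D_rootsE)
  have "(\<Sum>i<n. w i) = \<sigma> + \<tau>"
    using sum_mult_root_vec[of "{..<n}" "\<lambda>_. 1" a b \<sigma> \<tau>] ab w by simp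
  moreover have "w \<in> zvec n" using ab w by (auto simp: zvec_def root_vec_def unit_vec_def)
  ultimately show "w \<in> Dlat n" using ab by (auto simp: Dlat_def)
  show "w \<noteq> (\<lambda>_. 0)"
  proof
    assume "w = (\<lambda>_. 0)"
    hence "w a = 0" by simp
    thus False using ab w by (auto simp: root_vec_def unit_vec_def)
  qed
  have "w a = \<sigma>" "w b = \<tau>" using ab w by (auto simp: root_vec_def unit_vec_def)
  thus "znorm n w = 2"
    using sum_mult_root_vec[of "{..<n}" w a b \<sigma> \<tau>] ab w by (auto simp: znorm_def)
qed

lemma znorm_Dlat_ge_two:
  assumes x: "x \<in> Dlat n" and nonzero: "x \<noteq> (\<lambda>_. 0)"
  shows "2 \<le> znorm n x"
proof -
  obtain i where i: "x i \<noteq> 0" using nonzero by auto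
  hence "i < n" using x by (auto simp: Dlat_def zvec_def not_less[symmetric])
  hence "x i * x i \<le> znorm n x" unfolding znorm_def by (intro member_le_sum) auto
  moreover have "0 < x i * x i" using i by (auto simp: zero_less_mult_iff linorder_neq_iff)
  moreover have "even (znorm n x)"
  proof -
    have "even (\<Sum>i<n. x i * x i - x i)" by (intro dvd_sum) auto
    moreover have "even (\<Sum>i<n. x i)" using x by (simp add: Dlat_def)
    ultimately show ?thesis unfolding znorm_def by (simp add: sum_subtractf)
  qed
  ultimately show ?thesis by presburger
qed

lemma int_square_le_two: "(k::int) * k \<le> 2 \<Longrightarrow> k \<in> {-1, 0, 1}"
proof (rule ccontr)
  assume square: "k * k \<le> 2" and "k \<notin> {-1, 0, 1}"
  hence "2 \<le> \<bar>k\<bar>" by auto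
  hence "2 * 2 \<le> \<bar>k\<bar> * \<bar>k\<bar>" by (intro mult_mono) auto
  thus False using square by simp
qed

lemma norm_two_in_D_roots:
  assumes x: "x \<in> zvec n" and norm: "znorm n x = 2"
  shows "x \<in> D_roots n"
proof -
  define S where "S = {i. i < n \<and> x i \<noteq> 0}"
  have fin: "finite S" by (simp add: S_def)
  have outside: "x i = 0" if "i \<notin> S" for i
    using x that unfolding S_def zvec_def by (metis (mono_tags) mem_Collect_eq not_less)
  have "znorm n x = (\<Sum>i\<in>S. x i * x i)"
    unfolding znorm_def by (rule sum.mono_neutral_right) (auto simp: S_def)
  hence sum_S: "(\<Sum>i\<in>S. x i * x i) = 2" using norm by simp
  have unit: "x i \<in> {1, -1}" if "i \<in> S" for i
  proof -
    have "x i * x i \<le> (\<Sum>j\<in>S. x j * x j)" using fin that by (intro member_le_sum) auto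
    hence "x i \<in> {-1, 0, 1}" using sum_S int_square_le_two by simp
    thus ?thesis using that by (auto simp: S_def)
  qed
  have "x i * x i = 1" if "i \<in> S" for i using unit[OF that] by auto
  hence "(\<Sum>i\<in>S. x i * x i) = (\<Sum>i\<in>S. 1)" by (intro sum.cong) auto
  hence "card S = 2" using sum_S by simp
  then obtain a b where ab: "S = {a, b}" "a \<noteq> b" by (auto simp: card_2_iff)
  have x_root: "x = root_vec a b (x a) (x b)"
  proof
    fix i show "x i = root_vec a b (x a) (x b) i"
      using outside[of i] ab by (cases "i \<in> S") (auto simp: root_vec_def unit_vec_def)
  qed
  have "a \<in> S" "b \<in> S" using ab by auto
  hence "root_vec a b (x a) (x b) \<in> D_roots n"
    using ab(2) unit by (intro D_rootsI) (auto simp: S_def)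
  with x_root show ?thesis by simp
qed

lemma min_vectors_Dlat:
  assumes "2 \<le> n"
  shows "min_vectors n (Dlat n) = D_roots n"
proof
  show "D_roots n \<subseteq> min_vectors n (Dlat n)"
  proof
    fix w assume "w \<in> D_roots n"
    thus "w \<in> min_vectors n (Dlat n)"
      using D_rootsD[of w n] znorm_Dlat_ge_two unfolding min_vectors_def by auto
  qed
  show "min_vectors n (Dlat n) \<subseteq> D_roots n"
  proof
    fix x assume x: "x \<in> min_vectors n (Dlat n)"
    have "root_vec 0 1 1 1 \<in> D_roots n" using assms by (intro D_rootsI) auto
    from D_rootsD[OF this] have "znorm n x \<le> 2" using x unfolding min_vectors_def by auto
    moreover have "2 \<le> znorm n x" using x znorm_Dlat_ge_two unfolding min_vectors_def by auto
    ultimately show "x \<in> D_roots n"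
      using x norm_two_in_D_roots unfolding min_vectors_def Dlat_def by auto
  qed
qed

section \<open>Independent roots span a lattice containing \<open>2\<int>\<^sup>n\<close>\<close>

definition sign_vec :: "(nat \<Rightarrow> int) set \<Rightarrow> nat \<Rightarrow> nat \<Rightarrow> int" where
  "sign_vec L i a =
     (if (\<lambda>x. unit_vec i x - unit_vec a x) \<in> L then 1
      else if (\<lambda>x. unit_vec i x + unit_vec a x) \<in> L then -1 else 0)"

lemma sign_vec_eqI:
  assumes no: "(\<lambda>x. 2 * unit_vec i x) \<notin> int_span m v" and t: "t \<in> {1, -1}"
    and mem: "(\<lambda>x. unit_vec i x - t * unit_vec b x) \<in> int_span m v"
  shows "sign_vec (int_span m v) i b = t"
proof (cases "t = 1")
  case True
  thus ?thesis using mem by (simp add: sign_vec_def)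
next
  case False
  hence plus: "(\<lambda>x. unit_vec i x + unit_vec b x) \<in> int_span m v" using t mem by simp
  have "(\<lambda>x. unit_vec i x - unit_vec b x) \<notin> int_span m v"
  proof
    assume minus: "(\<lambda>x. unit_vec i x - unit_vec b x) \<in> int_span m v"
    have "(\<lambda>x. 2 * unit_vec i x) = (\<lambda>x. (unit_vec i x - unit_vec b x) + (unit_vec i x + unit_vec b x))"
      by auto
    also have "\<dots> \<in> int_span m v" by (rule int_span_add[OF minus plus])
    finally show False using no by simp
  qed
  thus ?thesis using plus False t by (simp add: sign_vec_def)
qed

lemma sign_vec_orthogonal_root:
  assumes no: "(\<lambda>x. 2 * unit_vec i x) \<notin> int_span m v"
    and \<sigma>: "\<sigma> \<in> {1, -1}" and \<tau>: "\<tau> \<in> {1, -1}" and root: "root_vec a b \<sigma> \<tau> \<in> int_span m v"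
  shows "\<sigma> * sign_vec (int_span m v) i a + \<tau> * sign_vec (int_span m v) i b = 0"
proof -
  let ?s = "sign_vec (int_span m v) i"
  have half: "\<sigma>' * ?s a' + \<tau>' * ?s b' = 0"
    if \<sigma>': "\<sigma>' \<in> {1, -1}" and \<tau>': "\<tau>' \<in> {1, -1}" and root': "root_vec a' b' \<sigma>' \<tau>' \<in> int_span m v"
      and nonzero: "?s a' \<noteq> 0" for a' b' \<sigma>' \<tau>'
  proof -
    have s: "?s a' \<in> {1, -1}" and s_mem: "(\<lambda>x. unit_vec i x - ?s a' * unit_vec a' x) \<in> int_span m v"
      using nonzero by (auto simp: sign_vec_def split: if_splits)
    have "(\<lambda>x. unit_vec i x - (- (?s a' * \<sigma>' * \<tau>')) * unit_vec b' x)
          = (\<lambda>x. (unit_vec i x - ?s a' * unit_vec a' x) + (?s a' * \<sigma>') * root_vec a' b' \<sigma>' \<tau>' x)"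
      using s \<sigma>' by (auto simp: fun_eq_iff root_vec_def algebra_simps)
    also have "\<dots> \<in> int_span m v" by (intro int_span_add int_span_smult s_mem root')
    finally have "?s b' = - (?s a' * \<sigma>' * \<tau>')"
      using sign_vec_eqI[OF no] s \<sigma>' \<tau>' by auto
    thus ?thesis using \<tau>' by (auto simp: algebra_simps)
  qed
  show ?thesis
  proof (cases "?s a = 0")
    case False
    thus ?thesis by (rule half[OF \<sigma> \<tau> root])
  next
    case True
    show ?thesis
    proof (cases "?s b = 0")
      case False
      have "root_vec b a \<tau> \<sigma> \<in> int_span m v" using root by (simp add: root_vec_swap)
      from half[OF \<tau> \<sigma> this False] show ?thesis by simp
    qed (use True in simp)
  qed
qed

lemma two_unit_vec_in_int_span:
  assumes indep: "lin_indep n n v" and roots: "\<forall>j<n. v j \<in> D_roots n" and i: "i < n"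
  shows "(\<lambda>x. 2 * unit_vec i x) \<in> int_span n v"
proof (rule ccontr)
  assume no: "(\<lambda>x. 2 * unit_vec i x) \<notin> int_span n v"
  let ?s = "sign_vec (int_span n v) i"
  have "?s i \<noteq> 0" using int_span_zero[of n v] by (simp add: sign_vec_def)
  moreover have "\<forall>j<n. (\<Sum>k<n. ?s k * v j k) = 0"
  proof (intro allI impI)
    fix j assume j: "j < n"
    obtain a b \<sigma> \<tau> where ab: "a < n" "b < n" "\<sigma> \<in> {1, -1}" "\<tau> \<in> {1, -1}"
      and vj: "v j = root_vec a b \<sigma> \<tau>"
      using roots j by (meson D_rootsE)
    have "root_vec a b \<sigma> \<tau> \<in> int_span n v" using int_span_generator[OF j, of v] vj by simp
    thus "(\<Sum>k<n. ?s k * v j k) = 0"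
      using sign_vec_orthogonal_root[OF no ab(3,4)] ab vj by (simp add: sum_mult_root_vec)
  qed
  ultimately show False using not_lin_indep_if_orthogonal[OF i] indep by blast
qed

lemma lin_indep_if_int_span_contains_multiples:
  assumes d: "d \<noteq> 0" and mult: "\<forall>z<n. (\<lambda>x. d * unit_vec z x) \<in> int_span n v"
  shows "lin_indep n n v"
proof (rule ccontr)
  assume "\<not> lin_indep n n v"
  then obtain c j0 where c: "\<forall>i<n. (\<Sum>j<n. c j * real_of_int (v j i)) = 0" "j0 < n" "c j0 \<noteq> 0"
    unfolding lin_indep_def by blast
  obtain w where "\<exists>z<n. w z \<noteq> 0" and w: "\<forall>j<n. (\<Sum>x<n. w x * real_of_int (v j x)) = 0"
    using left_null_vector_if_right_null_vector[of j0 n c "\<lambda>i j. real_of_int (v j i)"] c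
    by (auto simp: mult.commute)
  then obtain z where z: "z < n" "w z \<noteq> 0" by blast
  obtain e where e: "(\<lambda>x. d * unit_vec z x) = (\<lambda>x. \<Sum>j<n. e j * v j x)"
    using mult z(1) unfolding int_span_def by blast
  have "real_of_int d * w z = (\<Sum>x<n. w x * real_of_int (d * unit_vec z x))"
    using z(1) by (simp add: unit_vec_def if_distrib cong: if_cong)
  also have "\<dots> = (\<Sum>x<n. w x * (\<Sum>j<n. real_of_int (e j) * real_of_int (v j x)))"
  proof (intro sum.cong refl arg_cong[where f = "(*) (w _)"])
    fix x
    show "real_of_int (d * unit_vec z x) = (\<Sum>j<n. real_of_int (e j) * real_of_int (v j x))"
      using arg_cong[OF fun_cong[OF e, of x], of real_of_int] by simp
  qed
  also have "\<dots> = (\<Sum>x<n. \<Sum>j<n. real_of_int (e j) * (w x * real_of_int (v j x)))"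
    by (simp add: sum_distrib_left mult.left_commute)
  also have "\<dots> = (\<Sum>j<n. \<Sum>x<n. real_of_int (e j) * (w x * real_of_int (v j x)))"
    by (rule sum.swap)
  also have "\<dots> = (\<Sum>j<n. real_of_int (e j) * (\<Sum>x<n. w x * real_of_int (v j x)))"
    by (simp add: sum_distrib_left)
  also have "\<dots> = 0" using w by simp
  finally show False using z(2) d by simp
qed

section \<open>The classes of a root lattice\<close>

definition linked :: "(nat \<Rightarrow> int) set \<Rightarrow> nat \<Rightarrow> nat \<Rightarrow> bool" where
  "linked L a b \<longleftrightarrow> (\<lambda>x. unit_vec a x - unit_vec b x) \<in> L"

lemma equivp_linked: "equivp (linked (int_span m v))"
proof (rule equivpI)
  show "reflp (linked (int_span m v))"
    by (rule reflpI) (simp add: linked_def int_span_zero)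
  show "symp (linked (int_span m v))"
  proof (rule sympI)
    fix a b assume "linked (int_span m v) a b"
    hence "(\<lambda>x. (-1) * (unit_vec a x - unit_vec b x)) \<in> int_span m v"
      unfolding linked_def by (rule int_span_smult)
    thus "linked (int_span m v) b a" by (simp add: linked_def)
  qed
  show "transp (linked (int_span m v))"
  proof (rule transpI)
    fix a b c assume "linked (int_span m v) a b" "linked (int_span m v) b c"
    hence "(\<lambda>x. (unit_vec a x - unit_vec b x) + (unit_vec b x - unit_vec c x)) \<in> int_span m v"
      unfolding linked_def by (rule int_span_add)
    thus "linked (int_span m v) a c" by (simp add: linked_def)
  qed
qed

lemma linked_root_vec:
  assumes two: "(\<lambda>x. 2 * unit_vec b x) \<in> int_span m v" and \<sigma>: "\<sigma> \<in> {1, -1}" and \<tau>: "\<tau> \<in> {1, -1}"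
    and root: "root_vec a b \<sigma> \<tau> \<in> int_span m v"
  shows "linked (int_span m v) a b"
proof -
  have "(\<lambda>x. unit_vec a x - unit_vec b x)
        = (\<lambda>x. \<sigma> * root_vec a b \<sigma> \<tau> x - ((1 + \<sigma> * \<tau>) div 2) * (2 * unit_vec b x))"
    using \<sigma> \<tau> by (auto simp: fun_eq_iff root_vec_def)
  also have "\<dots> \<in> int_span m v" by (intro int_span_diff int_span_smult root two)
  finally show ?thesis unfolding linked_def .
qed

lemma linked_partner_exists:
  assumes indep: "lin_indep n n v" and roots: "\<forall>j<n. v j \<in> D_roots n"
    and two: "\<forall>z<n. (\<lambda>x. 2 * unit_vec z x) \<in> int_span n v" and i: "i < n"
  shows "\<exists>b<n. b \<noteq> i \<and> linked (int_span n v) i b"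
proof (rule ccontr)
  assume lonely: "\<not> (\<exists>b<n. b \<noteq> i \<and> linked (int_span n v) i b)"
  have "\<forall>j<n. (\<Sum>k<n. unit_vec i k * v j k) = 0"
  proof (intro allI impI)
    fix j assume j: "j < n"
    obtain a b \<sigma> \<tau> where ab: "a < n" "b < n" "a \<noteq> b" "\<sigma> \<in> {1, -1}" "\<tau> \<in> {1, -1}"
      and vj: "v j = root_vec a b \<sigma> \<tau>"
      using roots j by (meson D_rootsE)
    have "root_vec a b \<sigma> \<tau> \<in> int_span n v" using int_span_generator[OF j, of v] vj by simp
    hence "linked (int_span n v) a b" by (rule linked_root_vec[OF two[rule_format, OF ab(2)] ab(4,5)])
    moreover from this have "linked (int_span n v) b a" by (rule equivp_symp[OF equivp_linked])
    ultimately have "a \<noteq> i" "b \<noteq> i" using lonely ab(1-3) by auto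
    hence "v j i = 0" using vj by (simp add: root_vec_def unit_vec_def)
    thus "(\<Sum>k<n. unit_vec i k * v j k) = 0"
      using i by (subst mult.commute) (simp add: sum_mult_unit_vec)
  qed
  moreover have "unit_vec i i \<noteq> 0" by (simp add: unit_vec_def)
  ultimately show False using not_lin_indep_if_orthogonal[OF i] indep by blast
qed

definition least_rep :: "(nat \<Rightarrow> nat \<Rightarrow> bool) \<Rightarrow> nat \<Rightarrow> nat" where
  "least_rep P i = (LEAST a. P a i)"

lemma
  assumes P: "equivp P"
  shows least_rep_rel: "P (least_rep P i) i"
    and least_rep_le: "least_rep P i \<le> i"
    and least_rep_eq_iff: "least_rep P a = least_rep P b \<longleftrightarrow> P a b"
proof -
  show rel: "P (least_rep P i) i" for i
    unfolding least_rep_def by (rule LeastI[of "\<lambda>a. P a i" i]) (rule equivp_reflp[OF P])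
  show "least_rep P i \<le> i"
    unfolding least_rep_def by (rule Least_le) (rule equivp_reflp[OF P])
  show "least_rep P a = least_rep P b \<longleftrightarrow> P a b"
  proof
    assume "least_rep P a = least_rep P b"
    thus "P a b" using rel[of a] rel[of b] equivp_symp[OF P] equivp_transp[OF P] by metis
  next
    assume "P a b"
    hence "(\<lambda>x. P x a) = (\<lambda>x. P x b)"
      using equivp_symp[OF P] equivp_transp[OF P] by (intro ext iffI) blast+
    thus "least_rep P a = least_rep P b" unfolding least_rep_def by simp
  qed
qed

lemma equivp_enumerate_classes:
  fixes P :: "nat \<Rightarrow> nat \<Rightarrow> bool"
  assumes P: "equivp P" and n: "0 < n"
  obtains c :: nat and f q :: "nat \<Rightarrow> nat"
  where "1 \<le> c" "\<forall>i<n. f i < c" "\<forall>k<c. q k < n \<and> f (q k) = k"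
    "\<forall>a<n. \<forall>b<n. f a = f b \<longleftrightarrow> P a b"
proof -
  let ?r = "least_rep P"
  note r_rel = least_rep_rel[OF P] and r_eq_iff = least_rep_eq_iff[OF P]
  define R where "R = ?r ` {..<n}"
  define c where "c = card R"
  obtain g where g: "bij_betw g R {0..<c}"
    using ex_bij_betw_finite_nat[of R] unfolding c_def R_def by auto
  define f where "f i = g (?r i)" for i
  define q where "q k = inv_into R g k" for k
  have r_R: "?r i \<in> R" if "i < n" for i using that by (simp add: R_def)
  have "R \<noteq> {}" using n by (auto simp: R_def)
  hence "1 \<le> c" by (simp add: c_def R_def Suc_le_eq card_gt_0_iff)
  moreover have "\<forall>i<n. f i < c" using g r_R unfolding f_def bij_betw_def by auto
  moreover have "\<forall>k<c. q k < n \<and> f (q k) = k"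
  proof (intro allI impI)
    fix k assume "k < c"
    hence qR: "q k \<in> R" "g (q k) = k"
      using g unfolding q_def bij_betw_def by (auto intro: inv_into_into f_inv_into_f)
    then obtain i where i: "i < n" "q k = ?r i" by (auto simp: R_def)
    have "?r (q k) = q k" unfolding i(2) r_eq_iff by (rule r_rel)
    hence "f (q k) = k" using qR(2) by (simp add: f_def)
    moreover have "q k < n" using i least_rep_le[OF P, of i] by simp
    ultimately show "q k < n \<and> f (q k) = k" by simp
  qed
  moreover have "\<forall>a<n. \<forall>b<n. f a = f b \<longleftrightarrow> P a b"
  proof (intro allI impI)
    fix a b assume "a < n" "b < n"
    hence "f a = f b \<longleftrightarrow> ?r a = ?r b"
      using inj_on_eq_iff[OF bij_betw_imp_inj_on[OF g]] r_R by (simp add: f_def)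
    thus "f a = f b \<longleftrightarrow> P a b" using r_eq_iff by simp
  qed
  ultimately show thesis by (rule that)
qed

lemma double_card_classes_le:
  fixes f q :: "nat \<Rightarrow> nat"
  assumes q: "\<forall>k<c. q k < n \<and> f (q k) = k" and partner: "\<forall>i<n. \<exists>b<n. b \<noteq> i \<and> f b = f i"
  shows "2 * c \<le> n"
proof -
  obtain p where p: "\<forall>i<n. p i < n \<and> p i \<noteq> i \<and> f (p i) = f i" using partner by metis
  define \<phi> where "\<phi> = (\<lambda>(k, \<beta>). if \<beta> then p (q k) else q k)"
  have f_\<phi>: "f (\<phi> (k, \<beta>)) = k" if "k < c" for k \<beta> using p q that by (auto simp: \<phi>_def)
  have inj: "inj_on \<phi> ({..<c} \<times> UNIV)"
  proof (rule inj_onI, clarify)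
    fix k \<beta> k' \<beta>' assume k: "k < c" "k' < c" and eq: "\<phi> (k, \<beta>) = \<phi> (k', \<beta>')"
    hence "k = k'" using f_\<phi> by metis
    thus "k = k' \<and> \<beta> = \<beta>'" using eq p q k by (auto simp: \<phi>_def split: if_splits)
  qed
  have img: "\<phi> ` ({..<c} \<times> UNIV) \<subseteq> {..<n}" using p q by (auto simp: \<phi>_def)
  from card_inj_on_le[OF inj img finite_lessThan] show ?thesis
    by (simp add: card_cartesian_product)
qed

section \<open>Parity lattices\<close>

definition class_sum :: "nat \<Rightarrow> (nat \<Rightarrow> nat) \<Rightarrow> nat \<Rightarrow> (nat \<Rightarrow> int) \<Rightarrow> int" where
  "class_sum n f k x = (\<Sum>i\<in>{i. i < n \<and> f i = k}. x i)"

definition parity_lattice :: "nat \<Rightarrow> (nat \<Rightarrow> nat) \<Rightarrow> nat \<Rightarrow> (nat \<Rightarrow> int) set" where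
  "parity_lattice n f c = {x \<in> zvec n. \<forall>k<c. even (class_sum n f k x)}"

lemma sum_eq_sum_class_sum:
  assumes "\<forall>i<n. f i < c"
  shows "(\<Sum>i<n. x i) = (\<Sum>k<c. class_sum n f k x)"
proof -
  have "(\<Sum>k<c. \<Sum>i\<in>{i. i \<in> {..<n} \<and> f i = k}. x i) = (\<Sum>i<n. x i)"
    using assms by (intro sum.group) auto
  thus ?thesis unfolding class_sum_def by simp
qed

lemma class_sum_root_vec_even:
  assumes "a < n" "b < n" "\<sigma> \<in> {1, -1}" "\<tau> \<in> {1, -1}" "f a = f b"
  shows "even (class_sum n f k (root_vec a b \<sigma> \<tau>))"
  using sum_mult_root_vec[of "{i. i < n \<and> f i = k}" "\<lambda>_. 1" a b \<sigma> \<tau>] assms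
  by (auto simp: class_sum_def)

lemma even_zvec_in_int_span:
  assumes two: "\<forall>z<n. (\<lambda>x. 2 * unit_vec z x) \<in> int_span m v"
    and y: "y \<in> zvec n" "\<forall>z<n. even (y z)"
  shows "y \<in> int_span m v"
proof -
  have "y = (\<lambda>w. \<Sum>z<n. (y z div 2) * (2 * unit_vec z w))"
  proof
    fix w
    have "(\<Sum>z<n. (y z div 2) * (2 * unit_vec z w)) = (\<Sum>z<n. (2 * (y z div 2)) * unit_vec w z)"
      by (intro sum.cong) (auto simp: unit_vec_commute)
    also have "\<dots> = y w" using y by (auto simp: sum_mult_unit_vec zvec_def)
    finally show "y w = (\<Sum>z<n. (y z div 2) * (2 * unit_vec z w))" by simp
  qed
  also have "\<dots> \<in> int_span m v"
    using two by (intro int_span_sum[of _ "\<lambda>z w. (y z div 2) * (2 * unit_vec z w)"])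
      (auto intro: int_span_smult)
  finally show ?thesis .
qed

lemma collapse_to_representatives_even:
  assumes f: "\<forall>i<n. f i < c" and q: "\<forall>k<c. q k < n \<and> f (q k) = k"
    and x: "x \<in> parity_lattice n f c"
  shows "even (\<Sum>a<n. x a * unit_vec (q (f a)) z)"
proof -
  have "(\<Sum>a<n. x a * unit_vec (q (f a)) z) = (\<Sum>a<n. if q (f a) = z then x a else 0)"
    by (intro sum.cong) (auto simp: unit_vec_def)
  also have "\<dots> = (\<Sum>a\<in>{a \<in> {..<n}. q (f a) = z}. x a)" by (rule sum.inter_filter[symmetric]) simp
  finally have collapse: "(\<Sum>a<n. x a * unit_vec (q (f a)) z) = (\<Sum>a\<in>{a. a < n \<and> q (f a) = z}. x a)"
    by simp
  show ?thesis
  proof (cases "\<exists>k<c. z = q k")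
    case True
    then obtain k where k: "k < c" "z = q k" by auto
    have "q (f a) = z \<longleftrightarrow> f a = k" if "a < n" for a using k q f that by metis
    hence "{a. a < n \<and> q (f a) = z} = {a. a < n \<and> f a = k}" by auto
    thus ?thesis using collapse x k(1) by (simp add: parity_lattice_def class_sum_def)
  next
    case False
    hence "{a. a < n \<and> q (f a) = z} = {}" using f by auto
    hence "(\<Sum>a | a < n \<and> q (f a) = z. x a) = 0" by (simp only: sum.empty)
    thus ?thesis using collapse by simp
  qed
qed

lemma parity_lattice_subset_int_span:
  assumes two: "\<forall>z<n. (\<lambda>x. 2 * unit_vec z x) \<in> int_span m v"
    and f: "\<forall>i<n. f i < c" and q: "\<forall>k<c. q k < n \<and> f (q k) = k"
    and rep: "\<forall>a<n. linked (int_span m v) a (q (f a))"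
  shows "parity_lattice n f c \<subseteq> int_span m v"
proof
  fix x assume x: "x \<in> parity_lattice n f c"
  hence x_zvec: "x \<in> zvec n" unfolding parity_lattice_def by simp
  define y where "y z = (\<Sum>a<n. x a * unit_vec (q (f a)) z)" for z
  have "x = (\<lambda>z. y z + (\<Sum>a<n. x a * (unit_vec a z - unit_vec (q (f a)) z)))"
  proof
    fix z
    have "(\<Sum>a<n. x a * unit_vec a z) = (\<Sum>a<n. x a * unit_vec z a)"
      by (intro sum.cong) (auto simp: unit_vec_def)
    also have "\<dots> = x z" using x_zvec by (simp add: sum_mult_unit_vec zvec_def)
    finally have "(\<Sum>a<n. x a * unit_vec a z) = x z" .
    thus "x z = y z + (\<Sum>a<n. x a * (unit_vec a z - unit_vec (q (f a)) z))"
      by (simp add: y_def right_diff_distrib sum_subtractf)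
  qed
  also have "\<dots> \<in> int_span m v"
  proof (rule int_span_add)
    have "y \<in> zvec n" using f q by (auto simp: y_def zvec_def unit_vec_def intro!: sum.neutral)
    moreover have "\<forall>z<n. even (y z)"
      using collapse_to_representatives_even[OF f q x] by (simp add: y_def)
    ultimately show "y \<in> int_span m v" by (rule even_zvec_in_int_span[OF two])
    show "(\<lambda>z. \<Sum>a<n. x a * (unit_vec a z - unit_vec (q (f a)) z)) \<in> int_span m v"
      using rep by (intro int_span_sum[of _ "\<lambda>a z. x a * (unit_vec a z - unit_vec (q (f a)) z)"])
        (auto simp: linked_def intro: int_span_smult)
  qed
  finally show "x \<in> int_span m v" .
qed

lemma int_span_eq_parity_lattice:
  assumes gens: "\<forall>j<m. v j \<in> parity_lattice n f c"
    and two: "\<forall>z<n. (\<lambda>x. 2 * unit_vec z x) \<in> int_span m v"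
    and f: "\<forall>i<n. f i < c" and q: "\<forall>k<c. q k < n \<and> f (q k) = k"
    and rep: "\<forall>a<n. linked (int_span m v) a (q (f a))"
  shows "int_span m v = parity_lattice n f c"
proof
  show "int_span m v \<subseteq> parity_lattice n f c"
  proof
    fix x assume "x \<in> int_span m v"
    then obtain d where x: "x = (\<lambda>i. \<Sum>j<m. d j * v j i)" unfolding int_span_def by blast
    have "class_sum n f k x = (\<Sum>j<m. d j * class_sum n f k (v j))" for k
      unfolding x class_sum_def by (simp add: sum_distrib_left sum.swap[of _ "{i. i < n \<and> f i = k}"])
    moreover have "x \<in> zvec n" using gens unfolding x parity_lattice_def zvec_def by auto
    ultimately show "x \<in> parity_lattice n f c"
      using gens unfolding parity_lattice_def by (auto intro!: dvd_sum)
  qed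
  show "parity_lattice n f c \<subseteq> int_span m v"
    by (rule parity_lattice_subset_int_span[OF two f q rep])
qed

section \<open>The quotient by a parity lattice\<close>

lemma group_Dgroup: "group (Dgroup n)"
proof (rule groupI)
  fix x y assume "x \<in> carrier (Dgroup n)" "y \<in> carrier (Dgroup n)"
  thus "x \<otimes>\<^bsub>Dgroup n\<^esub> y \<in> carrier (Dgroup n)"
    by (auto simp: Dgroup_def Dlat_def zvec_def sum.distrib)
next
  show "\<one>\<^bsub>Dgroup n\<^esub> \<in> carrier (Dgroup n)" by (auto simp: Dgroup_def Dlat_def zvec_def)
next
  fix x y z
  show "x \<otimes>\<^bsub>Dgroup n\<^esub> y \<otimes>\<^bsub>Dgroup n\<^esub> z = x \<otimes>\<^bsub>Dgroup n\<^esub> (y \<otimes>\<^bsub>Dgroup n\<^esub> z)"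
    by (auto simp: Dgroup_def)
next
  fix x
  show "\<one>\<^bsub>Dgroup n\<^esub> \<otimes>\<^bsub>Dgroup n\<^esub> x = x" by (auto simp: Dgroup_def)
next
  fix x assume "x \<in> carrier (Dgroup n)"
  hence "(\<lambda>i. - x i) \<in> carrier (Dgroup n)"
    by (auto simp: Dgroup_def Dlat_def zvec_def sum_negf)
  moreover have "(\<lambda>i. - x i) \<otimes>\<^bsub>Dgroup n\<^esub> x = \<one>\<^bsub>Dgroup n\<^esub>" by (auto simp: Dgroup_def)
  ultimately show "\<exists>y\<in>carrier (Dgroup n). y \<otimes>\<^bsub>Dgroup n\<^esub> x = \<one>\<^bsub>Dgroup n\<^esub>" by blast
qed

lemma group_elem2: "group (elem2 k)"
proof (rule groupI)
  fix x y assume "x \<in> carrier (elem2 k)" "y \<in> carrier (elem2 k)"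
  thus "x \<otimes>\<^bsub>elem2 k\<^esub> y \<in> carrier (elem2 k)" by (auto simp: elem2_def)
next
  show "\<one>\<^bsub>elem2 k\<^esub> \<in> carrier (elem2 k)" by (auto simp: elem2_def)
next
  fix x y z
  show "x \<otimes>\<^bsub>elem2 k\<^esub> y \<otimes>\<^bsub>elem2 k\<^esub> z = x \<otimes>\<^bsub>elem2 k\<^esub> (y \<otimes>\<^bsub>elem2 k\<^esub> z)"
    by (simp add: elem2_def mod_add_left_eq mod_add_right_eq add.assoc)
next
  fix x assume x: "x \<in> carrier (elem2 k)"
  have "x i mod 2 = x i" for i
  proof -
    have "x i \<in> {0, 1}" using x by (simp add: elem2_def)
    thus ?thesis by auto
  qed
  thus "\<one>\<^bsub>elem2 k\<^esub> \<otimes>\<^bsub>elem2 k\<^esub> x = x" by (simp add: elem2_def fun_eq_iff)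
next
  fix x assume "x \<in> carrier (elem2 k)"
  moreover have "x \<otimes>\<^bsub>elem2 k\<^esub> x = \<one>\<^bsub>elem2 k\<^esub>" by (simp add: elem2_def fun_eq_iff)
  ultimately show "\<exists>y\<in>carrier (elem2 k). y \<otimes>\<^bsub>elem2 k\<^esub> x = \<one>\<^bsub>elem2 k\<^esub>" by blast
qed

text \<open>The parity of the last class is omitted: it is determined by the others, since the
  coordinate sum of a vector of \<open>D\<^sub>n\<close> is even.\<close>

definition class_parities :: "nat \<Rightarrow> (nat \<Rightarrow> nat) \<Rightarrow> nat \<Rightarrow> (nat \<Rightarrow> int) \<Rightarrow> nat \<Rightarrow> int" where
  "class_parities n f c x = (\<lambda>k. if k < c - 1 then class_sum n f k x mod 2 else 0)"

lemma class_parities_hom: "class_parities n f c \<in> hom (Dgroup n) (elem2 (c - 1))"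
proof (rule homI)
  fix x
  show "class_parities n f c x \<in> carrier (elem2 (c - 1))"
    by (auto simp: class_parities_def elem2_def mod2_eq_if)
next
  fix x y
  show "class_parities n f c (x \<otimes>\<^bsub>Dgroup n\<^esub> y)
        = class_parities n f c x \<otimes>\<^bsub>elem2 (c - 1)\<^esub> class_parities n f c y"
    by (auto simp: class_parities_def Dgroup_def elem2_def fun_eq_iff class_sum_def
        sum.distrib mod_add_eq)
qed

lemma class_parities_surj:
  assumes c: "1 \<le> c" and q: "\<forall>k<c. q k < n \<and> f (q k) = k"
  shows "class_parities n f c ` carrier (Dgroup n) = carrier (elem2 (c - 1))"
proof
  show "class_parities n f c ` carrier (Dgroup n) \<subseteq> carrier (elem2 (c - 1))"
    using class_parities_hom unfolding hom_def by auto
  show "carrier (elem2 (c - 1)) \<subseteq> class_parities n f c ` carrier (Dgroup n)"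
  proof
    fix y assume y: "y \<in> carrier (elem2 (c - 1))"
    define z where "z k = (if k < c - 1 then y k else \<Sum>l<c - 1. y l)" for k
    define x where "x i = (\<Sum>k<c. z k * unit_vec (q k) i)" for i
    have class_sum_x: "class_sum n f k x = z k" if "k < c" for k
    proof -
      have "q l \<in> {i. i < n \<and> f i = k} \<longleftrightarrow> l = k" if "l < c" for l using q that by auto
      thus ?thesis using \<open>k < c\<close>
        by (simp add: class_sum_def x_def sum_sum_mult_unit_vec if_distrib cong: if_cong)
    qed
    have "(\<Sum>i<n. x i) = (\<Sum>k<c. z k)" using q by (simp add: x_def sum_sum_mult_unit_vec)
    also have "\<dots> = (\<Sum>k<c - 1. y k) + (\<Sum>k<c - 1. y k)"
      using c by (cases c) (simp_all add: z_def)
    finally have "even (\<Sum>i<n. x i)" by simp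
    moreover have "x \<in> zvec n" using q by (auto simp: x_def zvec_def unit_vec_def intro!: sum.neutral)
    ultimately have "x \<in> carrier (Dgroup n)" by (simp add: Dgroup_def Dlat_def)
    moreover have "class_parities n f c x = y"
    proof
      fix k
      have "y k \<in> {0, 1}" "k \<ge> c - 1 \<Longrightarrow> y k = 0" using y by (auto simp: elem2_def)
      thus "class_parities n f c x k = y k"
        using class_sum_x[of k] by (auto simp: class_parities_def z_def)
    qed
    ultimately show "y \<in> class_parities n f c ` carrier (Dgroup n)" by blast
  qed
qed

lemma kernel_class_parities:
  assumes c: "1 \<le> c" and f: "\<forall>i<n. f i < c"
  shows "kernel (Dgroup n) (elem2 (c - 1)) (class_parities n f c) = parity_lattice n f c"
proof
  show "kernel (Dgroup n) (elem2 (c - 1)) (class_parities n f c) \<subseteq> parity_lattice n f c"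
  proof
    fix x assume "x \<in> kernel (Dgroup n) (elem2 (c - 1)) (class_parities n f c)"
    hence x: "x \<in> Dlat n" "class_parities n f c x = (\<lambda>_. 0)"
      by (auto simp: kernel_def Dgroup_def elem2_def)
    have init: "even (class_sum n f k x)" if "k < c - 1" for k
      using fun_cong[OF x(2), of k] that by (simp add: class_parities_def even_iff_mod_2_eq_zero)
    have "even (\<Sum>k<c. class_sum n f k x)"
      using x(1) sum_eq_sum_class_sum[OF f] by (simp add: Dlat_def)
    moreover have "(\<Sum>k<c. class_sum n f k x) = (\<Sum>k<c - 1. class_sum n f k x) + class_sum n f (c - 1) x"
      using c by (cases c) simp_all
    moreover have "even (\<Sum>k<c - 1. class_sum n f k x)" using init by (intro dvd_sum) auto
    ultimately have "even (class_sum n f (c - 1) x)" by simp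
    hence "even (class_sum n f k x)" if "k < c" for k
      using init[of k] that by (cases "k = c - 1") auto
    thus "x \<in> parity_lattice n f c" using x(1) by (simp add: parity_lattice_def Dlat_def)
  qed
  show "parity_lattice n f c \<subseteq> kernel (Dgroup n) (elem2 (c - 1)) (class_parities n f c)"
  proof
    fix x assume "x \<in> parity_lattice n f c"
    hence x: "x \<in> zvec n" "\<forall>k<c. even (class_sum n f k x)" by (auto simp: parity_lattice_def)
    have "even (\<Sum>i<n. x i)" unfolding sum_eq_sum_class_sum[OF f] using x(2) by (intro dvd_sum) auto
    thus "x \<in> kernel (Dgroup n) (elem2 (c - 1)) (class_parities n f c)"
      using x by (auto simp: kernel_def Dgroup_def elem2_def Dlat_def class_parities_def fun_eq_iff)
  qed
qed

lemma Dgroup_Mod_parity_lattice_iso: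
  assumes c: "1 \<le> c" and f: "\<forall>i<n. f i < c" and q: "\<forall>k<c. q k < n \<and> f (q k) = k"
  shows "Dgroup n Mod parity_lattice n f c \<cong> elem2 (c - 1)"
proof -
  have "group_hom (Dgroup n) (elem2 (c - 1)) (class_parities n f c)"
    by (intro group_hom.intro group_hom_axioms.intro group_Dgroup group_elem2 class_parities_hom)
  from group_hom.FactGroup_iso[OF this class_parities_surj[OF c q]]
  show ?thesis unfolding kernel_class_parities[OF c f] .
qed

lemma quotient_by_independent_roots:
  assumes n: "2 \<le> n" and roots: "\<forall>j<n. v j \<in> D_roots n" and indep: "lin_indep n n v"
  shows "\<exists>k. 2 * k + 2 \<le> n \<and> Dgroup n Mod int_span n v \<cong> elem2 k"
proof -
  let ?L = "int_span n v"
  have two: "\<forall>z<n. (\<lambda>x. 2 * unit_vec z x) \<in> ?L"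
    using two_unit_vec_in_int_span[OF indep roots] by blast
  have "0 < n" using n by simp
  then obtain c :: nat and f q :: "nat \<Rightarrow> nat" where c: "1 \<le> c" and f: "\<forall>i<n. f i < c" and q: "\<forall>k<c. q k < n \<and> f (q k) = k"
    and f_eq: "\<forall>a<n. \<forall>b<n. f a = f b \<longleftrightarrow> linked ?L a b"
    by (rule equivp_enumerate_classes[OF equivp_linked[of n v]])
  have rep: "\<forall>a<n. linked ?L a (q (f a))"
  proof (intro allI impI)
    fix a assume a: "a < n"
    hence "q (f a) < n" "f a = f (q (f a))" using f q by auto
    thus "linked ?L a (q (f a))" using f_eq a by blast
  qed
  have gens: "\<forall>j<n. v j \<in> parity_lattice n f c"
  proof (intro allI impI)
    fix j assume j: "j < n"
    obtain a b \<sigma> \<tau> where ab: "a < n" "b < n" "\<sigma> \<in> {1, -1}" "\<tau> \<in> {1, -1}"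
      and vj: "v j = root_vec a b \<sigma> \<tau>"
      using roots j by (meson D_rootsE)
    have "root_vec a b \<sigma> \<tau> \<in> ?L" using int_span_generator[OF j, of v] vj by simp
    hence "linked ?L a b" by (rule linked_root_vec[OF two[rule_format, OF ab(2)] ab(3,4)])
    hence "f a = f b" using f_eq ab(1,2) by blast
    moreover have "v j \<in> zvec n" using D_rootsD(1) roots j by (simp add: Dlat_def)
    ultimately show "v j \<in> parity_lattice n f c"
      using class_sum_root_vec_even[OF ab] vj by (simp add: parity_lattice_def)
  qed
  have "Dgroup n Mod ?L \<cong> elem2 (c - 1)"
    using int_span_eq_parity_lattice[OF gens two f q rep] Dgroup_Mod_parity_lattice_iso[OF c f q]
    by simp
  moreover have "2 * c \<le> n"
  proof (rule double_card_classes_le[OF q], intro allI impI)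
    fix i assume "i < n"
    then obtain b where "b < n" "b \<noteq> i" "linked ?L i b"
      using linked_partner_exists[OF indep roots two] by blast
    thus "\<exists>b<n. b \<noteq> i \<and> f b = f i" using f_eq \<open>i < n\<close> by metis
  qed
  ultimately show ?thesis using c by (intro exI[of _ "c - 1"]) simp
qed

text \<open>For \<open>2k + 2 \<le> n\<close>, the generators are the roots \<open>e\<^sub>2\<^sub>m \<plusminus> e\<^sub>2\<^sub>m\<^sub>+\<^sub>1\<close> for \<open>m \<le> k\<close> and \<open>e\<^sub>j\<^sub>-\<^sub>1 - e\<^sub>j\<close> for
  \<open>j > 2k + 1\<close>. The classes are \<open>{0, 1}, \<dots>, {2k - 2, 2k - 1}\<close> and \<open>{2k, \<dots>, n - 1}\<close>.\<close>

definition chain_roots :: "nat \<Rightarrow> nat \<Rightarrow> nat \<Rightarrow> int" where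
  "chain_roots k j =
     (if even j \<and> j \<le> 2 * k then root_vec j (Suc j) 1 1 else root_vec (j - 1) j 1 (-1))"

definition chain_class :: "nat \<Rightarrow> nat \<Rightarrow> nat" where
  "chain_class k i = (if i < 2 * k then i div 2 else k)"

lemma chain_roots_in_D_roots:
  assumes "2 * k + 2 \<le> n" "j < n"
  shows "chain_roots k j \<in> D_roots n"
proof (cases "even j \<and> j \<le> 2 * k")
  case True
  thus ?thesis using assms unfolding chain_roots_def by (auto intro: D_rootsI)
next
  case False
  hence "j \<noteq> 0" by (metis dvd_0_right le0)
  thus ?thesis using assms False unfolding chain_roots_def by (auto intro: D_rootsI)
qed

lemma chain_roots_linked_step:
  assumes "j < n" "\<not> (even j \<and> j \<le> 2 * k)"
  shows "linked (int_span n (chain_roots k)) (j - 1) j"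
  using int_span_generator[OF assms(1), of "chain_roots k"] assms(2)
  by (simp add: chain_roots_def linked_def root_vec_def)

lemma chain_roots_linked_to_representative:
  assumes kn: "2 * k + 2 \<le> n" and a: "a < n"
  shows "linked (int_span n (chain_roots k)) a (2 * chain_class k a)"
proof -
  let ?linked = "linked (int_span n (chain_roots k))"
  have P: "equivp ?linked" by (rule equivp_linked)
  show ?thesis
  proof (cases "a < 2 * k")
    case True
    show ?thesis
    proof (cases "even a")
      case True
      thus ?thesis using \<open>a < 2 * k\<close> equivp_reflp[OF P] by (simp add: chain_class_def)
    next
      case False
      hence "?linked (a - 1) a" using a by (intro chain_roots_linked_step) auto
      moreover have "2 * chain_class k a = a - 1"
        using False \<open>a < 2 * k\<close> by (simp add: chain_class_def)
      ultimately show ?thesis using equivp_symp[OF P] by simp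
    qed
  next
    case False
    have "?linked (2 * k + d) (2 * k)" if "2 * k + d < n" for d
      using that
    proof (induction d)
      case 0
      show ?case using equivp_reflp[OF P] by simp
    next
      case (Suc d)
      hence "?linked (2 * k + d) (2 * k + Suc d)"
        using chain_roots_linked_step[of "2 * k + Suc d" n k] by simp
      thus ?case using Suc equivp_symp[OF P] equivp_transp[OF P] by (metis Suc_lessD add_Suc_right)
    qed
    moreover obtain d where "a = 2 * k + d" using False by (metis le_add_diff_inverse not_less)
    ultimately show ?thesis using a False by (simp add: chain_class_def)
  qed
qed

lemma two_unit_vec_in_chain_span:
  assumes kn: "2 * k + 2 \<le> n" and z: "z < n"
  shows "(\<lambda>x. 2 * unit_vec z x) \<in> int_span n (chain_roots k)"
proof -
  let ?L = "int_span n (chain_roots k)"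
  define m where "m = chain_class k z"
  have m: "m \<le> k" unfolding m_def chain_class_def by presburger
  have "chain_roots k (2 * m) = root_vec (2 * m) (Suc (2 * m)) 1 1"
    "chain_roots k (Suc (2 * m)) = root_vec (2 * m) (Suc (2 * m)) 1 (-1)"
    using m by (simp_all add: chain_roots_def)
  hence "(\<lambda>x. 2 * unit_vec (2 * m) x)
         = (\<lambda>x. chain_roots k (2 * m) x + chain_roots k (Suc (2 * m)) x)"
    by (simp add: fun_eq_iff root_vec_def)
  also have "\<dots> \<in> ?L" using m kn by (intro int_span_add int_span_generator) auto
  finally have two_rep: "(\<lambda>x. 2 * unit_vec (2 * m) x) \<in> ?L" .
  have "(\<lambda>x. 2 * unit_vec z x)
        = (\<lambda>x. 2 * (unit_vec z x - unit_vec (2 * m) x) + 2 * unit_vec (2 * m) x)"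
    by (simp add: fun_eq_iff algebra_simps)
  also have "\<dots> \<in> ?L"
  proof (rule int_span_add[OF int_span_smult two_rep])
    show "(\<lambda>x. unit_vec z x - unit_vec (2 * m) x) \<in> ?L"
      using chain_roots_linked_to_representative[OF kn z] by (simp add: linked_def m_def)
  qed
  finally show ?thesis .
qed

lemma chain_roots_in_parity_lattice:
  assumes kn: "2 * k + 2 \<le> n" and j: "j < n"
  shows "chain_roots k j \<in> parity_lattice n (chain_class k) (k + 1)"
proof -
  have "chain_roots k j \<in> zvec n"
    using D_rootsD(1)[OF chain_roots_in_D_roots[OF assms]] by (simp add: Dlat_def)
  moreover have "even (class_sum n (chain_class k) l (chain_roots k j))" for l
  proof (cases "even j \<and> j \<le> 2 * k")
    case True
    hence "chain_class k j = chain_class k (Suc j)" by (auto simp: chain_class_def)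
    thus ?thesis unfolding chain_roots_def if_P[OF True] using True kn j
      by (intro class_sum_root_vec_even) auto
  next
    case False
    hence "chain_class k (j - 1) = chain_class k j" by (auto simp: chain_class_def) presburger+
    thus ?thesis unfolding chain_roots_def if_not_P[OF False] using j
      by (intro class_sum_root_vec_even) auto
  qed
  ultimately show ?thesis by (simp add: parity_lattice_def)
qed

lemma exists_independent_roots_with_quotient:
  assumes kn: "2 * k + 2 \<le> n"
  shows "\<exists>v. (\<forall>j<n. v j \<in> D_roots n) \<and> lin_indep n n v \<and> Dgroup n Mod int_span n v \<cong> elem2 k"
proof (intro exI conjI)
  let ?L = "int_span n (chain_roots k)"
  show "\<forall>j<n. chain_roots k j \<in> D_roots n" using chain_roots_in_D_roots[OF kn] by blast
  have two: "\<forall>z<n. (\<lambda>x. 2 * unit_vec z x) \<in> ?L" using two_unit_vec_in_chain_span[OF kn] by blast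
  show "lin_indep n n (chain_roots k)"
    by (rule lin_indep_if_int_span_contains_multiples[of 2]) (use two in simp_all)
  have f: "\<forall>i<n. chain_class k i < k + 1" unfolding chain_class_def by presburger
  have q: "\<forall>l<k + 1. 2 * l < n \<and> chain_class k (2 * l) = l" using kn by (auto simp: chain_class_def)
  have "?L = parity_lattice n (chain_class k) (k + 1)"
    using chain_roots_in_parity_lattice[OF kn] chain_roots_linked_to_representative[OF kn]
    by (intro int_span_eq_parity_lattice[OF _ two f q]) auto
  thus "Dgroup n Mod ?L \<cong> elem2 k" using Dgroup_Mod_parity_lattice_iso[OF _ f q] by simp
qed

theorem mainTheorem6:
  fixes n :: nat
  assumes "n \<ge> 2"
  defines "t \<equiv> (n - 2) div 2"
  shows "(\<forall>v. (\<forall>j<n. v j \<in> min_vectors n (Dlat n)) \<and> lin_indep n n v \<longrightarrow>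
            (\<exists>k\<le>t. Dgroup n Mod int_span n v \<cong> elem2 k))
       \<and> (\<forall>k\<le>t. \<exists>v. (\<forall>j<n. v j \<in> min_vectors n (Dlat n)) \<and> lin_indep n n v \<and>
            Dgroup n Mod int_span n v \<cong> elem2 k)"
proof -
  have t: "k \<le> t \<longleftrightarrow> 2 * k + 2 \<le> n" for k using assms(1) unfolding t_def by linarith
  note min_vectors = min_vectors_Dlat[OF assms(1)]
  show ?thesis
  proof (intro conjI allI impI)
    fix v assume "(\<forall>j<n. v j \<in> min_vectors n (Dlat n)) \<and> lin_indep n n v"
    hence "\<exists>k. 2 * k + 2 \<le> n \<and> Dgroup n Mod int_span n v \<cong> elem2 k"
      using quotient_by_independent_roots[OF assms(1)] min_vectors by simp
    thus "\<exists>k\<le>t. Dgroup n Mod int_span n v \<cong> elem2 k" using t by blast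
  next
    fix k assume "k \<le> t"
    thus "\<exists>v. (\<forall>j<n. v j \<in> min_vectors n (Dlat n)) \<and> lin_indep n n v \<and>
            Dgroup n Mod int_span n v \<cong> elem2 k"
      using exists_independent_roots_with_quotient t min_vectors by simp
  qed
qed

end
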